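(* Let $(\mathbb S,+,\cdot)$ be an S-Field. Then $q_0^*(0)$ does not exist, i.e. the Standard Base $q_0(0)$ of $\mathbb S_0$ is not Reversible.
   Context: An S-Structure is a triple $(\mathbb S,+,\cdot)$ where $\mathbb S$ is a set and $+,\cdot$ are binary operations on $\mathbb S$ such that: $(\mathbb S,+)$ is a commutative group with identity $0$ (the inverse of $s$ is written $-s$, and $s-t:=s+(-t)$); $\mathbb S$ is closed under $\cdot$; and there exists $s\in\mathbb S$ with $0\cdot s\neq 0$ or $s\cdot 0\neq 0$. Multiplication binds tighter than addition. The structures considered come with a distinguished element of $\mathbb S$ denoted $1$. It is Commutative if $s\cdot t=t\cdot s$ for all $s,t$. For a Commutative S-Structure and $\alpha\in\mathbb S$, put $\mathbb S_\alpha=\{s\in\mathbb S:0\cdot s=s\cdot 0=\alpha\}$ and $\Lambda=\{\alpha\in\mathbb S:\mathbb S_\alpha\neq\emptyset\}$. Wheel Distributive: $s\cdot(t+r)+(s\cdot 0)=(s\cdot t)+(s\cdot r)$ for all $s,t,r\in\mathbb S$. S-Associative: for all $m,n\in\mathbb S_0$ and $s\in\mathbb S$, $m\cdot(n\cdot s)=(m\cdot n)\cdot s-([(m-1)\cdot(n-1)]\cdot(0\cdot s))$. Base: if $\mathbb S_0\neq\emptyset$ and $\alpha\in\Lambda$, $q\in\mathbb S_\alpha$ is a Base for $\mathbb S_\alpha$ if $q+\beta\in\mathbb S_\alpha$ for all $\beta\in\mathbb S_0$ and every $s\in\mathbb S_\alpha$ equals $q+\beta$ for some $\beta\in\mathbb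 S_0$. Coordinated: $\mathbb S_0\neq\emptyset$ and every $\mathbb S_\alpha$ with $\alpha\in\Lambda$ has a Base. Standard Bases: a Coordinated Commutative S-Structure has Standard Bases if there is a specified element $q_0(1)\in\mathbb S_1$ which is a Base for $\mathbb S_1$, and for every $\alpha\in\Lambda$ the element $q_0(\alpha):=\alpha\cdot(q_0(1)+1)-1$ (the Standard Base of $\mathbb S_\alpha$) lies in $\mathbb S_\alpha$ and is a Base for $\mathbb S_\alpha$. An Essential S-Structure is an S-Structure that is Commutative, Wheel Distributive, S-Associative, has Standard Bases (in particular is Coordinated), satisfies $0,1\in\mathbb S_0$, and satisfies $\mathbb S_0=\{1\cdot x:x\in\mathbb S_0\}$. A Unity is an element $e\in\Lambda$ with $e\cdot s=s\cdot e=s$ for all $s\in\mathbb S$. Scalar Inverses: the structure has a Unity $e$ and for every $x\in\mathbb S_0$ with $x\neq 0$ there is $x^{-1}\in\mathbb S_0$ with $x\cdot x^{-1}=x^{-1}\cdot x=e$. An S-Ring is an Essential S-Structure with a Unity; an S-Field is an S-Ring with Scalar Inverses. Reversible: in an Essential S-Structure, for $\alpha\in\Lambda$, the Standard Base $q_0(\alpha)$ is Reversible if there exists $\alpha^*\in\Lambda$ with $q_0(1)=\alpha^*\cdot(q_0(\alpha)+\alpha)-\alpha$; in that case the Reversible Standard Base is $q_0^*(\alpha):=q_0(\alpha)$ (and $q_0^*(\alpha)$ is said not to exist otherwise). *)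

theory Defs
  imports Main
begin

text \<open>An S-Structure is modelled on a whole type 'a (the set S), with operations
  add (+), neg (additive inverse), zero (0), mult (\<cdot>), a distinguished element one (1),
  and a specified element q01 (the specified Standard Base q_0(1) of S_1).\<close>

definition S_structure :: "('a \<Rightarrow> 'a \<Rightarrow> 'a) \<Rightarrow> ('a \<Rightarrow> 'a) \<Rightarrow> 'a \<Rightarrow> ('a \<Rightarrow> 'a \<Rightarrow> 'a) \<Rightarrow> bool" where
  "S_structure add neg zero mult \<longleftrightarrow>
     (\<forall>s t r. add (add s t) r = add s (add t r)) \<and>
     (\<forall>s t. add s t = add t s) \<and>
     (\<forall>s. add zero s = s) \<and>
     (\<forall>s. add s (neg s) = zero) \<and>
     (\<exists>s. mult zero s \<noteq> zero \<or> mult s zero \<noteq> zero)"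

definition Sa :: "'a \<Rightarrow> ('a \<Rightarrow> 'a \<Rightarrow> 'a) \<Rightarrow> 'a \<Rightarrow> 'a set" where
  "Sa zero mult \<alpha> = {s. mult zero s = \<alpha> \<and> mult s zero = \<alpha>}"

definition Lam :: "'a \<Rightarrow> ('a \<Rightarrow> 'a \<Rightarrow> 'a) \<Rightarrow> 'a set" where
  "Lam zero mult = {\<alpha>. Sa zero mult \<alpha> \<noteq> {}}"

definition commutative :: "('a \<Rightarrow> 'a \<Rightarrow> 'a) \<Rightarrow> bool" where
  "commutative mult \<longleftrightarrow> (\<forall>s t. mult s t = mult t s)"

definition wheel_distributive :: "('a \<Rightarrow> 'a \<Rightarrow> 'a) \<Rightarrow> 'a \<Rightarrow> ('a \<Rightarrow> 'a \<Rightarrow> 'a) \<Rightarrow> bool" where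
  "wheel_distributive add zero mult \<longleftrightarrow>
     (\<forall>s t r. add (mult s (add t r)) (mult s zero) = add (mult s t) (mult s r))"

definition S_associative :: "('a \<Rightarrow> 'a \<Rightarrow> 'a) \<Rightarrow> ('a \<Rightarrow> 'a) \<Rightarrow> 'a \<Rightarrow> 'a \<Rightarrow> ('a \<Rightarrow> 'a \<Rightarrow> 'a) \<Rightarrow> bool" where
  "S_associative add neg zero one mult \<longleftrightarrow>
     (\<forall>m \<in> Sa zero mult zero. \<forall>n \<in> Sa zero mult zero. \<forall>s.
        mult m (mult n s) =
        add (mult (mult m n) s)
            (neg (mult (mult (add m (neg one)) (add n (neg one))) (mult zero s))))"

definition is_base :: "('a \<Rightarrow> 'a \<Rightarrow> 'a) \<Rightarrow> 'a \<Rightarrow> ('a \<Rightarrow> 'a \<Rightarrow> 'a) \<Rightarrow> 'a \<Rightarrow> 'a \<Rightarrow> bool" where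
  "is_base add zero mult \<alpha> q \<longleftrightarrow>
     q \<in> Sa zero mult \<alpha> \<and>
     (\<forall>\<beta> \<in> Sa zero mult zero. add q \<beta> \<in> Sa zero mult \<alpha>) \<and>
     (\<forall>s \<in> Sa zero mult \<alpha>. \<exists>\<beta> \<in> Sa zero mult zero. s = add q \<beta>)"

definition coordinated :: "('a \<Rightarrow> 'a \<Rightarrow> 'a) \<Rightarrow> 'a \<Rightarrow> ('a \<Rightarrow> 'a \<Rightarrow> 'a) \<Rightarrow> bool" where
  "coordinated add zero mult \<longleftrightarrow>
     Sa zero mult zero \<noteq> {} \<and>
     (\<forall>\<alpha> \<in> Lam zero mult. \<exists>q. is_base add zero mult \<alpha> q)"

definition q0 :: "('a \<Rightarrow> 'a \<Rightarrow> 'a) \<Rightarrow> ('a \<Rightarrow> 'a) \<Rightarrow> 'a \<Rightarrow> ('a \<Rightarrow> 'a \<Rightarrow> 'a) \<Rightarrow> 'a \<Rightarrow> 'a \<Rightarrow> 'a" where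
  "q0 add neg one mult q01 \<alpha> = add (mult \<alpha> (add q01 one)) (neg one)"

definition standard_bases ::
  "('a \<Rightarrow> 'a \<Rightarrow> 'a) \<Rightarrow> ('a \<Rightarrow> 'a) \<Rightarrow> 'a \<Rightarrow> 'a \<Rightarrow> ('a \<Rightarrow> 'a \<Rightarrow> 'a) \<Rightarrow> 'a \<Rightarrow> bool" where
  "standard_bases add neg zero one mult q01 \<longleftrightarrow>
     coordinated add zero mult \<and> commutative mult \<and>
     is_base add zero mult one q01 \<and>
     (\<forall>\<alpha> \<in> Lam zero mult. is_base add zero mult \<alpha> (q0 add neg one mult q01 \<alpha>))"

definition essential_S_structure ::
  "('a \<Rightarrow> 'a \<Rightarrow> 'a) \<Rightarrow> ('a \<Rightarrow> 'a) \<Rightarrow> 'a \<Rightarrow> 'a \<Rightarrow> ('a \<Rightarrow> 'a \<Rightarrow> 'a) \<Rightarrow> 'a \<Rightarrow> bool" where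
  "essential_S_structure add neg zero one mult q01 \<longleftrightarrow>
     S_structure add neg zero mult \<and>
     commutative mult \<and>
     wheel_distributive add zero mult \<and>
     S_associative add neg zero one mult \<and>
     standard_bases add neg zero one mult q01 \<and>
     zero \<in> Sa zero mult zero \<and> one \<in> Sa zero mult zero \<and>
     Sa zero mult zero = {mult one x | x. x \<in> Sa zero mult zero}"

definition is_unity :: "'a \<Rightarrow> ('a \<Rightarrow> 'a \<Rightarrow> 'a) \<Rightarrow> 'a \<Rightarrow> bool" where
  "is_unity zero mult e \<longleftrightarrow> e \<in> Lam zero mult \<and> (\<forall>s. mult e s = s \<and> mult s e = s)"

definition scalar_inverses :: "'a \<Rightarrow> ('a \<Rightarrow> 'a \<Rightarrow> 'a) \<Rightarrow> bool" where
  "scalar_inverses zero mult \<longleftrightarrow>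
     (\<exists>e. is_unity zero mult e \<and>
        (\<forall>x \<in> Sa zero mult zero. x \<noteq> zero \<longrightarrow>
           (\<exists>y \<in> Sa zero mult zero. mult x y = e \<and> mult y x = e)))"

definition S_ring ::
  "('a \<Rightarrow> 'a \<Rightarrow> 'a) \<Rightarrow> ('a \<Rightarrow> 'a) \<Rightarrow> 'a \<Rightarrow> 'a \<Rightarrow> ('a \<Rightarrow> 'a \<Rightarrow> 'a) \<Rightarrow> 'a \<Rightarrow> bool" where
  "S_ring add neg zero one mult q01 \<longleftrightarrow>
     essential_S_structure add neg zero one mult q01 \<and> (\<exists>e. is_unity zero mult e)"

definition S_field ::
  "('a \<Rightarrow> 'a \<Rightarrow> 'a) \<Rightarrow> ('a \<Rightarrow> 'a) \<Rightarrow> 'a \<Rightarrow> 'a \<Rightarrow> ('a \<Rightarrow> 'a \<Rightarrow> 'a) \<Rightarrow> 'a \<Rightarrow> bool" where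
  "S_field add neg zero one mult q01 \<longleftrightarrow>
     S_ring add neg zero one mult q01 \<and> scalar_inverses zero mult"

text \<open>q_0(alpha) is Reversible: exists alpha* in Lambda with
  q_0(1) = alpha* (q_0(alpha) + alpha) - alpha.  q_0^*(alpha) exists iff this holds.\<close>
definition reversible ::
  "('a \<Rightarrow> 'a \<Rightarrow> 'a) \<Rightarrow> ('a \<Rightarrow> 'a) \<Rightarrow> 'a \<Rightarrow> 'a \<Rightarrow> ('a \<Rightarrow> 'a \<Rightarrow> 'a) \<Rightarrow> 'a \<Rightarrow> 'a \<Rightarrow> bool" where
  "reversible add neg zero one mult q01 \<alpha> \<longleftrightarrow>
     \<alpha> \<in> Lam zero mult \<and>
     (\<exists>\<alpha>s \<in> Lam zero mult.
        q01 = add (mult \<alpha>s (add (q0 add neg one mult q01 \<alpha>) \<alpha>)) (neg \<alpha>))"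

end

theory Submission
  imports Defs
begin

text \<open>Write \<open>f s = 0 \<cdot> s\<close>. Wheel distributivity makes \<open>f\<close> additive, and S-associativity
  applied to the Unity and \<open>1\<close> forces \<open>f \<circ> f = 0\<close>. Since \<open>q\<^sub>0(0) = f(q\<^sub>0(1)) + f(1) - 1 = 0\<close>,
  reversibility of \<open>q\<^sub>0(0)\<close> would give \<open>q\<^sub>0(1) = \<alpha>\<^sup>* \<cdot> 0 = f(\<alpha>\<^sup>*)\<close> with \<open>\<alpha>\<^sup>* = f(s)\<close>, i.e.
  \<open>q\<^sub>0(1) = 0\<close>, hence \<open>1 = f(q\<^sub>0(1)) = 0\<close>. Then every Standard Base \<open>q\<^sub>0(\<alpha>) = f(\<alpha>)\<close> vanishes, and
  \<open>q\<^sub>0(\<alpha>) \<in> \<S>\<^sub>\<alpha>\<close> gives \<open>\<alpha> = f(0) = 0\<close> for all \<open>\<alpha> \<in> \<Lambda>\<close>; but \<open>\<Lambda>\<close> is the range of \<open>f\<close>,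
  which is nonzero by the S-Structure axiom.\<close>

locale essential_S =
  fixes add :: "'a \<Rightarrow> 'a \<Rightarrow> 'a" and neg :: "'a \<Rightarrow> 'a" and zero one :: 'a
    and mult :: "'a \<Rightarrow> 'a \<Rightarrow> 'a" and q01 :: 'a
  assumes essential: "essential_S_structure add neg zero one mult q01"
begin

sublocale add: abel_semigroup add
  using essential unfolding essential_S_structure_def S_structure_def
  by unfold_locales blast+

sublocale add: group add zero neg
  using essential add.commute unfolding essential_S_structure_def S_structure_def
  by unfold_locales metis+

lemma mult_commute: "mult s t = mult t s"
  using essential unfolding essential_S_structure_def commutative_def by blast

lemma S_nontrivial: "\<exists>s. mult zero s \<noteq> zero"
  using essential mult_commute unfolding essential_S_structure_def S_structure_def by metis

lemma zero_in_S0: "zero \<in> Sa zero mult zero"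
  and one_in_S0: "one \<in> Sa zero mult zero"
  using essential unfolding essential_S_structure_def by blast+

lemma mult_zero_zero: "mult zero zero = zero"
  using zero_in_S0 unfolding Sa_def by simp

lemma mult_zero_one: "mult zero one = zero"
  using one_in_S0 unfolding Sa_def by simp

lemma mult_zero_q01: "mult zero q01 = one"
  using essential
  unfolding essential_S_structure_def standard_bases_def is_base_def Sa_def by simp

lemma mult_zero_add: "mult zero (add t r) = add (mult zero t) (mult zero r)"
  using essential mult_zero_zero add.right_neutral
  unfolding essential_S_structure_def wheel_distributive_def by metis

lemma mult_zero_neg: "mult zero (neg x) = neg (mult zero x)"
proof -
  have "add (mult zero (neg x)) (mult zero x) = zero"
    using mult_zero_add[of "neg x" x] mult_zero_zero by simp
  then show ?thesis
    by (metis add.inverse_unique add.commute)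
qed

lemma Lam_eq_range: "Lam zero mult = range (mult zero)"
  unfolding Lam_def Sa_def using mult_commute by auto

lemma q0_zero: "q0 add neg one mult q01 zero = zero"
  unfolding q0_def mult_zero_add mult_zero_q01 mult_zero_one by simp

lemma q0_in_Sa: "\<alpha> \<in> Lam zero mult \<Longrightarrow> q0 add neg one mult q01 \<alpha> \<in> Sa zero mult \<alpha>"
  using essential unfolding essential_S_structure_def standard_bases_def is_base_def by blast

lemma reversible_zero_imp_q01:
  assumes "reversible add neg zero one mult q01 zero"
  shows "\<exists>s. q01 = mult zero (mult zero s)"
proof -
  obtain \<alpha> where "\<alpha> \<in> Lam zero mult"
    and "q01 = add (mult \<alpha> (add (q0 add neg one mult q01 zero) zero)) (neg zero)"
    using assms unfolding reversible_def by blast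
  then show ?thesis
    by (auto simp: q0_zero Lam_eq_range mult_commute)
qed

end

locale S_ring_with_unity = essential_S +
  fixes e :: 'a
  assumes unity: "is_unity zero mult e"
begin

lemma unity_mult: "mult e s = s"
  using unity unfolding is_unity_def by blast

lemma mult_zero_mult_zero: "mult zero (mult zero s) = zero"
proof -
  have "e \<in> Sa zero mult zero"
    using unity unfolding is_unity_def Sa_def by simp
  with one_in_S0 have "mult e (mult one s) = add (mult (mult e one) s)
      (neg (mult (mult (add e (neg one)) (add one (neg one))) (mult zero s)))"
    using essential unfolding essential_S_structure_def S_associative_def by blast
  moreover have "mult (add e (neg one)) (add one (neg one)) = zero"
    using mult_commute[of _ zero] mult_zero_add mult_zero_neg mult_zero_one
      unity_mult[of zero] by simp
  ultimately have "add (mult one s) (neg (mult zero (mult zero s))) = add (mult one s) zero"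
    by (simp add: unity_mult)
  then show ?thesis
    by (metis add.left_cancel add.inverse_inverse add.inverse_neutral)
qed

theorem not_reversible_zero: "\<not> reversible add neg zero one mult q01 zero"
proof
  assume "reversible add neg zero one mult q01 zero"
  then have q01_zero: "q01 = zero"
    using reversible_zero_imp_q01 mult_zero_mult_zero by auto
  then have one_zero: "one = zero"
    using mult_zero_q01 mult_zero_zero by simp
  obtain s where s: "mult zero s \<noteq> zero"
    using S_nontrivial by blast
  have "mult zero s \<in> Lam zero mult"
    using Lam_eq_range by simp
  then have "q0 add neg one mult q01 (mult zero s) \<in> Sa zero mult (mult zero s)"
    by (rule q0_in_Sa)
  moreover have "q0 add neg one mult q01 (mult zero s) = zero"
    unfolding q0_def q01_zero one_zero
    by (simp add: mult_commute[of _ zero] mult_zero_mult_zero)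
  ultimately show False
    using s mult_zero_zero unfolding Sa_def by simp
qed

end

theorem proposition4p2p2:
  fixes add mult :: "'a \<Rightarrow> 'a \<Rightarrow> 'a" and neg :: "'a \<Rightarrow> 'a" and zero one q01 :: 'a
  assumes "S_field add neg zero one mult q01"
  shows "\<not> reversible add neg zero one mult q01 zero"
proof -
  obtain e where "essential_S_structure add neg zero one mult q01" and "is_unity zero mult e"
    using assms unfolding S_field_def S_ring_def by blast
  then interpret S_ring_with_unity add neg zero one mult q01 e
    by unfold_locales
  show ?thesis
    by (rule not_reversible_zero)
qed

end
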